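(* Let $k,n,t$ be positive integers. Then $$\sum_{\pi\in NC^k(n)} \#\{V\in\pi : |V| = tk\} \;=\; \binom{n(k+1)-t-1}{nk-1}.$$
   Context: A partition of a finite set $S$ is a set of pairwise disjoint non-empty subsets (blocks) of $S$ whose union is $S$. A partition $\pi$ of $[N]=\{1,\dots,N\}$ is non-crossing if there are no $1\le a<b<c<d\le N$ with $a,c$ in one block and $b,d$ in a different block. $NC^k(n)$ denotes the set of non-crossing partitions of $[kn]$ all of whose blocks have size divisible by $k$. Binomial coefficients: for integers $a,b$, $\binom{a}{b}=\frac{a!}{b!(a-b)!}$ if $0\le b\le a$ and $\binom{a}{b}=0$ otherwise. *)

theory Defs
  imports Main
begin

definition is_partition :: "'a set set \<Rightarrow> 'a set \<Rightarrow> bool" where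
  "is_partition P S \<longleftrightarrow>
     (\<forall>B\<in>P. B \<noteq> {}) \<and>
     (\<forall>B\<in>P. \<forall>C\<in>P. B \<noteq> C \<longrightarrow> B \<inter> C = {}) \<and>
     \<Union>P = S"

definition non_crossing :: "nat set set \<Rightarrow> bool" where
  "non_crossing P \<longleftrightarrow>
     \<not> (\<exists>B\<in>P. \<exists>C\<in>P. B \<noteq> C \<and>
          (\<exists>a b c d. a < b \<and> b < c \<and> c < d \<and> a \<in> B \<and> c \<in> B \<and> b \<in> C \<and> d \<in> C))"

definition NCk :: "nat \<Rightarrow> nat \<Rightarrow> nat set set set" where
  "NCk k n = {P. is_partition P {1..k*n} \<and> non_crossing P \<and> (\<forall>B\<in>P. k dvd card B)}"

end

theory Submission
  imports Defs
begin

text \<open>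
  Classify the non-crossing partitions of an interval \<open>[lo, hi)\<close> whose blocks other than the
  first one have sizes divisible by \<open>k\<close> by the size \<open>r\<close> of the block containing \<open>lo\<close>.
  If \<open>b\<close> is the \<open>(p+1)\<close>-st element of that block, non-crossingness forces every other block to
  lie on one side of \<open>b\<close>, so cutting the interval before \<open>b\<close> splits the partition into two
  independent partitions of the same kind, with first blocks of sizes \<open>p\<close> and \<open>r - p\<close>; joining
  their first blocks inverts this. This gives convolution recurrences for the number of these
  partitions and for the total number of their non-first blocks of a given size, and removing a
  singleton first block relates both to non-crossing partitions all of whose block sizes are
  divisible by \<open>k\<close>. Explicit binomial expressions satisfy the same recurrences by Pascal's rule
  and telescoping, so they agree by induction on the length of the interval. The theorem is the
  case of the interval \<open>[0, kn]\<close> whose first block is the singleton \<open>{0}\<close>.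
\<close>

lemma is_partition_subset: "is_partition P S \<Longrightarrow> V \<in> P \<Longrightarrow> V \<subseteq> S"
  unfolding is_partition_def by blast

lemma is_partition_nonempty: "is_partition P S \<Longrightarrow> V \<in> P \<Longrightarrow> V \<noteq> {}"
  unfolding is_partition_def by blast

lemma is_partition_disjoint:
  "is_partition P S \<Longrightarrow> U \<in> P \<Longrightarrow> W \<in> P \<Longrightarrow> U \<noteq> W \<Longrightarrow> U \<inter> W = {}"
  unfolding is_partition_def by blast

lemma is_partition_unique:
  "is_partition P S \<Longrightarrow> U \<in> P \<Longrightarrow> W \<in> P \<Longrightarrow> x \<in> U \<Longrightarrow> x \<in> W \<Longrightarrow> U = W"
  unfolding is_partition_def by blast

lemma is_partition_cover: "is_partition P S \<Longrightarrow> x \<in> S \<Longrightarrow> \<exists>V\<in>P. x \<in> V"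
  unfolding is_partition_def by blast

lemma is_partition_finite: "is_partition P S \<Longrightarrow> finite S \<Longrightarrow> finite P"
  unfolding is_partition_def by (metis Pow_iff finite_Pow_iff finite_subset subsetI Sup_upper)

lemma finite_partitions: "finite S \<Longrightarrow> finite {P. is_partition P S}"
  by (rule finite_subset[of _ "Pow (Pow S)"]) (auto simp: is_partition_def)

lemma non_crossingD:
  assumes "non_crossing P" "B \<in> P" "C \<in> P" "B \<noteq> C" "a < b" "b < c" "c < d"
    "a \<in> B" "c \<in> B" "b \<in> C" "d \<in> C"
  shows False
  using assms(1) unfolding non_crossing_def using assms(2-) by metis

lemma non_crossingI:
  assumes "\<And>B C a b c d. B \<in> P \<Longrightarrow> C \<in> P \<Longrightarrow> B \<noteq> C \<Longrightarrow> a < b \<Longrightarrow> b < c \<Longrightarrow> c < d \<Longrightarrow>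
    a \<in> B \<Longrightarrow> c \<in> B \<Longrightarrow> b \<in> C \<Longrightarrow> d \<in> C \<Longrightarrow> False"
  shows "non_crossing P"
  unfolding non_crossing_def using assms by blast

lemma non_crossing_subset: "non_crossing P \<Longrightarrow> Q \<subseteq> P \<Longrightarrow> non_crossing Q"
  by (rule non_crossingI) (auto intro: non_crossingD[of P])

definition block_of :: "'a set set \<Rightarrow> 'a \<Rightarrow> 'a set" where
  "block_of P x = \<Union>{V\<in>P. x \<in> V}"

lemma block_of_eq:
  assumes "is_partition P S" "V \<in> P" "x \<in> V"
  shows "block_of P x = V"
proof -
  have "{W\<in>P. x \<in> W} = {V}"
    using is_partition_unique[OF assms(1)] assms(2,3) by blast
  then show ?thesis unfolding block_of_def by simp
qed

definition restrict_partition :: "'a set set \<Rightarrow> 'a set \<Rightarrow> 'a set set" where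
  "restrict_partition P A = (\<lambda>V. V \<inter> A) ` P - {{}}"

lemma is_partition_restrict:
  "is_partition P S \<Longrightarrow> is_partition (restrict_partition P A) (S \<inter> A)"
  unfolding is_partition_def restrict_partition_def by blast

lemma non_crossing_restrict:
  assumes nc: "non_crossing P"
  shows "non_crossing (restrict_partition P A)"
proof (rule non_crossingI)
  fix B C a b c d
  assume BC: "B \<in> restrict_partition P A" "C \<in> restrict_partition P A" "B \<noteq> C"
    and abcd: "a < b" "b < c" "c < d" "a \<in> B" "c \<in> B" "b \<in> C" "d \<in> C"
  from BC(1,2) obtain V W where "V \<in> P" "W \<in> P" "B = V \<inter> A" "C = W \<inter> A"
    unfolding restrict_partition_def by blast
  with BC(3) abcd show False using non_crossingD[OF nc \<open>V \<in> P\<close> \<open>W \<in> P\<close>] by blast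
qed

lemma is_partition_insert_singleton:
  "is_partition Q S \<Longrightarrow> x \<notin> S \<Longrightarrow> is_partition (insert {x} Q) (insert x S)"
  unfolding is_partition_def by blast

lemma is_partition_remove_singleton:
  assumes P: "is_partition P S" and x: "{x} \<in> P"
  shows "is_partition (P - {{x}}) (S - {x})"
proof -
  have "x \<notin> V" if "V \<in> P - {{x}}" for V
    using is_partition_disjoint[OF P _ x] that by blast
  then have "\<Union>(P - {{x}}) = \<Union>P - {x}" by blast
  then show ?thesis using P unfolding is_partition_def by auto
qed

lemma non_crossing_insert_singleton:
  assumes "non_crossing Q"
  shows "non_crossing (insert {x} Q)"
proof (rule non_crossingI)
  fix B C a b c d
  assume "B \<in> insert {x} Q" "C \<in> insert {x} Q" "B \<noteq> C" "a < b" "b < c" "c < d"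
    "a \<in> B" "c \<in> B" "b \<in> C" "d \<in> C"
  moreover from this have "B \<noteq> {x}" "C \<noteq> {x}" by auto
  ultimately show False using non_crossingD[OF assms] by blast
qed

lemma non_crossing_restrict_partitionD:
  assumes G: "is_partition G S" "non_crossing (restrict_partition G A)"
    and UW: "U \<in> G" "W \<in> G" "U \<noteq> W"
    and x: "x1 < x2" "x2 < x3" "x3 < x4" "x1 \<in> U" "x3 \<in> U" "x2 \<in> W" "x4 \<in> W"
    and A: "x1 \<in> A" "x2 \<in> A" "x3 \<in> A" "x4 \<in> A"
  shows False
proof -
  have "U \<inter> A \<in> restrict_partition G A" "W \<inter> A \<in> restrict_partition G A"
    using UW x A unfolding restrict_partition_def by blast+
  moreover have "U \<inter> A \<noteq> W \<inter> A" using is_partition_disjoint[OF G(1) UW] x(4) A(1) by blast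
  ultimately show False using non_crossingD[OF G(2)] x A by blast
qed

lemma min_block_not_nested:
  assumes P: "is_partition P S" "non_crossing P" and B: "B \<in> P" "m \<in> B" "\<forall>x\<in>S. m \<le> x"
    and W: "W \<in> P" "W \<noteq> B" and xyz: "x < y" "y < z" "x \<in> W" "y \<in> B" "z \<in> W"
  shows False
proof -
  have "m \<noteq> x" using is_partition_disjoint[OF P(1) W(1) B(1) W(2)] B(2) xyz(3) by blast
  moreover have "m \<le> x" using B(3) is_partition_subset[OF P(1) W(1)] xyz(3) by blast
  ultimately have "m < x" by simp
  then show False using non_crossingD[OF P(2) B(1) W(1) W(2)[symmetric]] B(2) xyz by blast
qed

lemma min_block_separates:
  assumes P: "is_partition P S" "non_crossing P" and B: "B \<in> P" "m \<in> B" "\<forall>x\<in>S. m \<le> x"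
    and b: "b \<in> B" and V: "V \<in> P" "V \<noteq> B"
  shows "V \<subseteq> {..<b} \<or> V \<subseteq> {b<..}"
proof (rule ccontr)
  assume "\<not> (V \<subseteq> {..<b} \<or> V \<subseteq> {b<..})"
  then obtain x y where xy: "x \<in> V" "\<not> b < x" "y \<in> V" "\<not> y < b" by auto
  moreover have "b \<notin> V" using is_partition_disjoint[OF P(1) V(1) B(1) V(2)] b by blast
  ultimately have "x < b" "b < y" by (metis linorder_neqE_nat)+
  with xy show False using min_block_not_nested[OF P B V _ _ _ b] by blast
qed

section \<open>Joining two partitions along a pair of blocks\<close>

definition join_blocks :: "'a set set \<Rightarrow> 'a set \<Rightarrow> 'a set set \<Rightarrow> 'a set \<Rightarrow> 'a set set" where
  "join_blocks P B Q C = insert (B \<union> C) ((P - {B}) \<union> (Q - {C}))"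

lemma join_blocks_commute: "join_blocks P B Q C = join_blocks Q C P B"
  unfolding join_blocks_def by (simp add: Un_commute)

context
  fixes P Q :: "'a set set" and S T B C :: "'a set"
  assumes P: "is_partition P S" and Q: "is_partition Q T" and ST: "S \<inter> T = {}"
    and B: "B \<in> P" and C: "C \<in> Q"
begin

lemma is_partition_join_blocks: "is_partition (join_blocks P B Q C) (S \<union> T)"
proof -
  have PQ: "U \<inter> W = {}" if "U \<in> P" "W \<in> Q" for U W
    using is_partition_subset[OF P that(1)] is_partition_subset[OF Q that(2)] ST by blast
  have BC: "V \<inter> (B \<union> C) = {}" if "V \<in> (P - {B}) \<union> (Q - {C})" for V
  proof (cases "V \<in> P - {B}")
    case True
    then show ?thesis using is_partition_disjoint[OF P _ B] PQ[OF _ C] by auto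
  next
    case False
    then have "V \<in> Q" "V \<noteq> C" using that by auto
    then show ?thesis using is_partition_disjoint[OF Q _ C] PQ[OF B] by auto
  qed
  have disj: "U \<inter> W = {}"
    if U: "U \<in> join_blocks P B Q C" and W: "W \<in> join_blocks P B Q C" and UW: "U \<noteq> W" for U W
  proof -
    consider "U = B \<union> C" | "W = B \<union> C" | "U \<in> P" "W \<in> P" | "U \<in> P" "W \<in> Q" | "U \<in> Q" "W \<in> P"
      | "U \<in> Q" "W \<in> Q"
      using U W unfolding join_blocks_def by blast
    then show ?thesis
    proof cases
      case 1 then show ?thesis using BC[of W] W UW unfolding join_blocks_def by blast
    next
      case 2 then show ?thesis using BC[of U] U UW unfolding join_blocks_def by blast
    qed (use UW is_partition_disjoint[OF P] is_partition_disjoint[OF Q] PQ in blast)+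
  qed
  have "V \<noteq> {}" if "V \<in> join_blocks P B Q C" for V
    using that is_partition_nonempty[OF P] is_partition_nonempty[OF Q] B unfolding join_blocks_def by blast
  moreover have "\<Union>(join_blocks P B Q C) = \<Union>P \<union> \<Union>Q"
    using B C unfolding join_blocks_def by blast
  then have "\<Union>(join_blocks P B Q C) = S \<union> T"
    using P Q unfolding is_partition_def by simp
  ultimately show ?thesis using disj unfolding is_partition_def by blast
qed

lemma restrict_join_blocks_left: "restrict_partition (join_blocks P B Q C) S = P"
proof -
  have "(\<lambda>V. V \<inter> S) ` join_blocks P B Q C = insert B ((P - {B}) \<union> (\<lambda>_. {}) ` (Q - {C}))"
  proof -
    have "(\<lambda>V. V \<inter> S) ` (P - {B}) = P - {B}"
      using is_partition_subset[OF P] by (auto simp: Int_absorb2 image_iff)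
    moreover have "(\<lambda>V. V \<inter> S) ` (Q - {C}) = (\<lambda>_. {}) ` (Q - {C})"
    proof (rule image_cong[OF refl])
      show "V \<inter> S = {}" if "V \<in> Q - {C}" for V
        using is_partition_subset[OF Q] that ST by blast
    qed
    moreover have "(B \<union> C) \<inter> S = B"
      using is_partition_subset[OF P B] is_partition_subset[OF Q C] ST by blast
    ultimately show ?thesis unfolding join_blocks_def image_insert image_Un by simp
  qed
  moreover have "{} \<notin> P" using is_partition_nonempty[OF P] by blast
  ultimately show ?thesis unfolding restrict_partition_def using B by auto
qed

lemma join_blocks_meets_both:
  assumes "U \<in> join_blocks P B Q C" "U \<inter> S \<noteq> {}" "U \<inter> T \<noteq> {}"
  shows "U = B \<union> C"
  using assms is_partition_subset[OF P] is_partition_subset[OF Q] ST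
  unfolding join_blocks_def by blast

end

lemma restrict_join_blocks_right:
  assumes "is_partition P S" "is_partition Q T" "S \<inter> T = {}" "B \<in> P" "C \<in> Q"
  shows "restrict_partition (join_blocks P B Q C) T = Q"
  using restrict_join_blocks_left[OF assms(2,1) _ assms(5,4)] assms(3)
  by (simp add: join_blocks_commute Int_commute)

context
  fixes P Q :: "nat set set" and S T B C :: "nat set" and a c :: nat
  assumes P: "is_partition P S" "non_crossing P" and Q: "is_partition Q T" "non_crossing Q"
    and ST: "\<forall>x\<in>S. \<forall>y\<in>T. x < y"
    and B: "B \<in> P" "a \<in> B" "\<forall>x\<in>S. a \<le> x" and C: "C \<in> Q" "c \<in> C" "\<forall>x\<in>T. c \<le> x"
begin

private lemma disjoint_sides: "S \<inter> T = {}"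
  using ST by fastforce

private lemma join_blocks_partition: "is_partition (join_blocks P B Q C) (S \<union> T)"
  by (rule is_partition_join_blocks[OF P(1) Q(1) disjoint_sides B(1) C(1)])

lemma join_blocks_crossing_straddles:
  assumes UW: "U \<in> join_blocks P B Q C" "W \<in> join_blocks P B Q C" "U \<noteq> W"
    and x: "x1 < x2" "x2 < x3" "x3 < x4" "x1 \<in> U" "x3 \<in> U" "x2 \<in> W" "x4 \<in> W"
  shows "x1 \<in> S \<and> x4 \<in> T"
proof -
  let ?G = "join_blocks P B Q C"
  note G = join_blocks_partition
  have inST: "x1 \<in> S \<union> T" "x2 \<in> S \<union> T" "x3 \<in> S \<union> T" "x4 \<in> S \<union> T"
    using is_partition_subset[OF G] UW x by blast+
  have "x4 \<notin> S"
  proof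
    assume "x4 \<in> S"
    moreover from this have "x1 \<in> S" "x2 \<in> S" "x3 \<in> S" using ST inST x by fastforce+
    moreover have "non_crossing (restrict_partition ?G S)"
      using restrict_join_blocks_left[OF P(1) Q(1) disjoint_sides B(1) C(1)] P(2) by simp
    ultimately show False using non_crossing_restrict_partitionD[OF G _ UW x] by blast
  qed
  moreover have "x1 \<notin> T"
  proof
    assume "x1 \<in> T"
    moreover from this have "x2 \<in> T" "x3 \<in> T" "x4 \<in> T" using ST inST x by fastforce+
    moreover have "non_crossing (restrict_partition ?G T)"
      using restrict_join_blocks_right[OF P(1) Q(1) disjoint_sides B(1) C(1)] Q(2) by simp
    ultimately show False using non_crossing_restrict_partitionD[OF G _ UW x] by blast
  qed
  ultimately show ?thesis using inST by blast
qed

lemma non_crossing_join_blocks: "non_crossing (join_blocks P B Q C)"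
proof (rule non_crossingI)
  let ?G = "join_blocks P B Q C"
  note disj = disjoint_sides and G = join_blocks_partition
  fix U W x1 x2 x3 x4
  assume UW: "U \<in> ?G" "W \<in> ?G" "U \<noteq> W"
    and x: "x1 < x2" "x2 < x3" "x3 < x4" "x1 \<in> U" "x3 \<in> U" "x2 \<in> W" "x4 \<in> W"
  have x14: "x1 \<in> S" "x4 \<in> T" using join_blocks_crossing_straddles[OF UW x] by simp_all
  have BC: "(B \<union> C) \<inter> S = B" "(B \<union> C) \<inter> T = C"
    using is_partition_subset[OF P(1) B(1)] is_partition_subset[OF Q(1) C(1)] disj by blast+
  have other: "V \<in> P - {B} \<or> V \<in> Q - {C}" if "V \<in> ?G" "V \<noteq> B \<union> C" for V
    using that unfolding join_blocks_def by blast
  show False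
  proof (cases "x3 \<in> S")
    case True
    then have "x2 \<in> S" using ST is_partition_subset[OF G] UW(2) x(2,6) by fastforce
    then have "W = B \<union> C"
      using join_blocks_meets_both[OF P(1) Q(1) disj B(1) C(1) UW(2)] x x14 by blast
    then have "U \<in> P - {B}"
      using other[OF UW(1)] UW(3) x(4) x14 is_partition_subset[OF Q(1)] disj by blast
    moreover have "x2 \<in> B" using \<open>W = B \<union> C\<close> BC(1) x(6) \<open>x2 \<in> S\<close> by blast
    ultimately show False using min_block_not_nested[OF P B _ _ x(1,2,4) _ x(5)] by blast
  next
    case False
    then have "x3 \<in> T" using is_partition_subset[OF G] UW(1) x(5) by blast
    then have "U = B \<union> C"
      using join_blocks_meets_both[OF P(1) Q(1) disj B(1) C(1) UW(1)] x x14 by blast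
    then have "W \<in> Q" "W \<noteq> C"
      using other[OF UW(2)] UW(3) x x14 is_partition_subset[OF P(1)] disj by blast+
    moreover have "x3 \<in> C" using \<open>U = B \<union> C\<close> BC \<open>x3 \<in> T\<close> x by blast
    ultimately show False using min_block_not_nested[OF Q C _ _ x(2,3) x(6) _ x(7)] by blast
  qed
qed

end

lemma restrict_partition_separated:
  assumes P: "is_partition P U" and B: "B \<in> P" "B \<inter> A \<noteq> {}"
    and sep: "\<And>V. V \<in> P \<Longrightarrow> V \<noteq> B \<Longrightarrow> V \<subseteq> A \<or> V \<inter> A = {}"
  shows "restrict_partition P A = insert (B \<inter> A) {V \<in> P. V \<noteq> B \<and> V \<subseteq> A}"
proof (intro set_eqI iffI)
  fix X assume "X \<in> restrict_partition P A"
  then obtain V where V: "V \<in> P" "X = V \<inter> A" "X \<noteq> {}" unfolding restrict_partition_def by blast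
  show "X \<in> insert (B \<inter> A) {V \<in> P. V \<noteq> B \<and> V \<subseteq> A}"
  proof (cases "V = B")
    case False
    then have "V \<subseteq> A" using sep[OF V(1)] V(2,3) by blast
    then show ?thesis using V False by (simp add: Int_absorb2)
  qed (use V in simp)
next
  fix X assume X: "X \<in> insert (B \<inter> A) {V \<in> P. V \<noteq> B \<and> V \<subseteq> A}"
  have "X \<noteq> {}" using X B(2) is_partition_nonempty[OF P] by auto
  moreover have "X \<in> (\<lambda>V. V \<inter> A) ` P" using X B(1) by auto
  ultimately show "X \<in> restrict_partition P A" unfolding restrict_partition_def by simp
qed

lemma join_blocks_restrict:
  assumes P: "is_partition P (S \<union> T)" and ST: "S \<inter> T = {}"
    and B: "B \<in> P" "B \<inter> S \<noteq> {}" "B \<inter> T \<noteq> {}"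
    and sep: "\<And>V. V \<in> P \<Longrightarrow> V \<noteq> B \<Longrightarrow> V \<subseteq> S \<or> V \<subseteq> T"
  shows "join_blocks (restrict_partition P S) (B \<inter> S) (restrict_partition P T) (B \<inter> T) = P"
proof -
  have notin: "B \<inter> R \<notin> {V \<in> P. V \<noteq> B \<and> V \<subseteq> R}" if "B \<inter> R \<noteq> {}" for R
    using is_partition_disjoint[OF P _ B(1)] that by blast
  have "restrict_partition P S = insert (B \<inter> S) {V \<in> P. V \<noteq> B \<and> V \<subseteq> S}"
    by (rule restrict_partition_separated[OF P B(1,2)]) (use sep ST in blast)
  then have "restrict_partition P S - {B \<inter> S} = {V \<in> P. V \<noteq> B \<and> V \<subseteq> S}"
    using Diff_insert_absorb[OF notin[OF B(2)]] by simp
  moreover have "restrict_partition P T = insert (B \<inter> T) {V \<in> P. V \<noteq> B \<and> V \<subseteq> T}"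
    by (rule restrict_partition_separated[OF P B(1,3)]) (use sep ST in blast)
  then have "restrict_partition P T - {B \<inter> T} = {V \<in> P. V \<noteq> B \<and> V \<subseteq> T}"
    using Diff_insert_absorb[OF notin[OF B(3)]] by simp
  moreover have "B \<inter> S \<union> B \<inter> T = B" using is_partition_subset[OF P B(1)] by blast
  moreover have "P - {B} = {V \<in> P. V \<noteq> B \<and> V \<subseteq> S} \<union> {V \<in> P. V \<noteq> B \<and> V \<subseteq> T}"
    using sep by blast
  ultimately show ?thesis unfolding join_blocks_def using B(1) by (metis insert_Diff)
qed

section \<open>Partitions of an interval classified by their first block\<close>

lemma rank_bij_betw:
  fixes B :: "nat set"
  assumes "finite B"
  shows "bij_betw (\<lambda>b. card (B \<inter> {..<b})) B {..<card B}"
proof -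
  have mono: "card (B \<inter> {..<x}) < card (B \<inter> {..<y})" if "x \<in> B" "x < y" for x y
    by (rule psubset_card_mono) (use assms that in auto)
  have "inj_on (\<lambda>b. card (B \<inter> {..<b})) B"
    by (rule inj_onI) (metis mono linorder_neqE_nat less_irrefl)
  moreover have "(\<lambda>b. card (B \<inter> {..<b})) ` B \<subseteq> {..<card B}"
  proof (rule image_subsetI)
    fix b assume "b \<in> B"
    then have "B \<inter> {..<b} \<subset> B" by auto
    then show "card (B \<inter> {..<b}) \<in> {..<card B}" using psubset_card_mono[OF assms] by simp
  qed
  ultimately show ?thesis
    unfolding bij_betw_def by (simp add: card_image card_subset_eq)
qed

definition ncp :: "nat \<Rightarrow> nat set \<Rightarrow> nat set set set" where
  "ncp k S = {P. is_partition P S \<and> non_crossing P \<and> (\<forall>B\<in>P. k dvd card B)}"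

definition ncp_first :: "nat \<Rightarrow> nat \<Rightarrow> nat \<Rightarrow> nat \<Rightarrow> nat set set set" where
  "ncp_first k lo hi r = {P. is_partition P {lo..<hi} \<and> non_crossing P \<and>
     (\<exists>B\<in>P. lo \<in> B \<and> card B = r \<and> (\<forall>C\<in>P. C \<noteq> B \<longrightarrow> k dvd card C))}"

lemma ncp_firstI:
  assumes "is_partition P {lo..<hi}" "non_crossing P" "B \<in> P" "lo \<in> B" "card B = r"
    "\<And>C. C \<in> P \<Longrightarrow> C \<noteq> B \<Longrightarrow> k dvd card C"
  shows "P \<in> ncp_first k lo hi r"
  unfolding ncp_first_def using assms by blast

lemma ncp_firstD:
  assumes "P \<in> ncp_first k lo hi r"
  shows "is_partition P {lo..<hi}" "non_crossing P" "block_of P lo \<in> P" "lo \<in> block_of P lo"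
    "card (block_of P lo) = r" "\<And>C. C \<in> P \<Longrightarrow> C \<noteq> block_of P lo \<Longrightarrow> k dvd card C"
proof -
  obtain B where P: "is_partition P {lo..<hi}" "non_crossing P"
    and B: "B \<in> P" "lo \<in> B" "card B = r" "\<forall>C\<in>P. C \<noteq> B \<longrightarrow> k dvd card C"
    using assms unfolding ncp_first_def by blast
  moreover have "block_of P lo = B" using block_of_eq[OF P(1) B(1,2)] .
  ultimately show "is_partition P {lo..<hi}" "non_crossing P" "block_of P lo \<in> P" "lo \<in> block_of P lo"
    "card (block_of P lo) = r" "\<And>C. C \<in> P \<Longrightarrow> C \<noteq> block_of P lo \<Longrightarrow> k dvd card C"
    by simp_all
qed

lemma ncp_first_lo_less: "P \<in> ncp_first k lo hi r \<Longrightarrow> lo < hi"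
  using is_partition_subset[OF ncp_firstD(1,3)] ncp_firstD(4) by fastforce

lemma finite_ncp_first: "finite (ncp_first k lo hi r)"
  by (rule finite_subset[OF _ finite_partitions[of "{lo..<hi}"]]) (auto simp: ncp_first_def)

definition ncp_first_split :: "nat \<Rightarrow> nat \<Rightarrow> nat \<Rightarrow> nat \<Rightarrow> nat \<Rightarrow> nat \<Rightarrow> nat set set set" where
  "ncp_first_split k lo hi p q b =
     {P \<in> ncp_first k lo hi (p + q). b \<in> block_of P lo \<and> card (block_of P lo \<inter> {..<b}) = p}"

definition glue_first :: "nat set set \<Rightarrow> nat \<Rightarrow> nat set set \<Rightarrow> nat \<Rightarrow> nat set set" where
  "glue_first P1 lo P2 b = join_blocks P1 (block_of P1 lo) P2 (block_of P2 b)"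

context
  fixes k lo b hi p q :: nat and P1 P2 :: "nat set set"
  assumes P1: "P1 \<in> ncp_first k lo b p" and P2: "P2 \<in> ncp_first k b hi q"
begin

private lemma halves: "{lo..<b} \<inter> {b..<hi} = {}" "{lo..<b} \<union> {b..<hi} = {lo..<hi}"
  using ncp_first_lo_less[OF P1] ncp_first_lo_less[OF P2] by auto

lemma restrict_glue_first:
  "restrict_partition (glue_first P1 lo P2 b) {lo..<b} = P1"
  "restrict_partition (glue_first P1 lo P2 b) {b..<hi} = P2"
  unfolding glue_first_def
  using restrict_join_blocks_left[OF ncp_firstD(1)[OF P1] ncp_firstD(1)[OF P2] halves(1)
      ncp_firstD(3)[OF P1] ncp_firstD(3)[OF P2]]
    restrict_join_blocks_right[OF ncp_firstD(1)[OF P1] ncp_firstD(1)[OF P2] halves(1)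
      ncp_firstD(3)[OF P1] ncp_firstD(3)[OF P2]]
  by simp_all

lemma glue_first_mem_split: "glue_first P1 lo P2 b \<in> ncp_first_split k lo hi p q b"
proof -
  note p1 = ncp_firstD[OF P1] and p2 = ncp_firstD[OF P2]
  let ?B1 = "block_of P1 lo" and ?B2 = "block_of P2 b" and ?G = "glue_first P1 lo P2 b"
  have G: "is_partition ?G {lo..<hi}"
    using is_partition_join_blocks[OF p1(1) p2(1) halves(1) p1(3) p2(3)] halves(2)
    unfolding glue_first_def by simp
  have sub: "?B1 \<subseteq> {lo..<b}" "?B2 \<subseteq> {b..<hi}" using is_partition_subset p1(1,3) p2(1,3) by blast+
  then have B: "?B1 \<inter> ?B2 = {}" "(?B1 \<union> ?B2) \<inter> {..<b} = ?B1" by force+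
  have BG: "?B1 \<union> ?B2 \<in> ?G" unfolding glue_first_def join_blocks_def by simp
  have "card (?B1 \<union> ?B2) = p + q"
    using card_Un_disjoint[OF _ _ B(1)] p1(5) p2(5) sub finite_subset by blast
  moreover have "k dvd card C" if "C \<in> ?G" "C \<noteq> ?B1 \<union> ?B2" for C
    using that p1(6) p2(6) unfolding glue_first_def join_blocks_def by blast
  moreover have "non_crossing ?G" unfolding glue_first_def
    by (rule non_crossing_join_blocks[OF p1(1,2) p2(1,2) _ p1(3,4) _ p2(3,4)]) auto
  ultimately have "?G \<in> ncp_first k lo hi (p + q)"
    using ncp_firstI[OF G _ BG] p1(4) by blast
  moreover have "block_of ?G lo = ?B1 \<union> ?B2" using block_of_eq[OF G BG] p1(4) by blast
  ultimately show ?thesis unfolding ncp_first_split_def using B(2) p1(5) p2(4) by simp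
qed

lemma glue_first_count:
  "card {V \<in> glue_first P1 lo P2 b. lo \<notin> V \<and> card V = c} =
     card {V \<in> P1. lo \<notin> V \<and> card V = c} + card {V \<in> P2. b \<notin> V \<and> card V = c}"
proof -
  note p1 = ncp_firstD[OF P1] and p2 = ncp_firstD[OF P2]
  have sub1: "V \<subseteq> {lo..<b}" if "V \<in> P1" for V using is_partition_subset[OF p1(1) that] .
  have sub2: "V \<subseteq> {b..<hi}" if "V \<in> P2" for V using is_partition_subset[OF p2(1) that] .
  have "lo \<notin> V \<longleftrightarrow> V \<noteq> block_of P1 lo" if "V \<in> P1" for V
    using block_of_eq[OF p1(1) that] p1(4) by blast
  moreover have "b \<notin> V \<longleftrightarrow> V \<noteq> block_of P2 b" if "V \<in> P2" for V
    using block_of_eq[OF p2(1) that] p2(4) by blast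
  moreover have "lo \<notin> V" if "V \<in> P2" for V using sub2[OF that] ncp_first_lo_less[OF P1] by auto
  ultimately have "{V \<in> glue_first P1 lo P2 b. lo \<notin> V \<and> card V = c} =
      {V \<in> P1. lo \<notin> V \<and> card V = c} \<union> {V \<in> P2. b \<notin> V \<and> card V = c}"
    using p1(4) unfolding glue_first_def join_blocks_def by blast
  moreover have "P1 \<inter> P2 = {}"
    using sub1 sub2 is_partition_nonempty[OF p1(1)] by fastforce
  moreover have "finite P1" "finite P2"
    using is_partition_finite p1(1) p2(1) by blast+
  ultimately show ?thesis by (simp add: card_Un_disjoint disjoint_iff)
qed

end

lemma ncp_first_splitD:
  assumes P: "P \<in> ncp_first_split k lo hi p q b" and p: "0 < p"
  shows "lo < b" "b < hi" "card (block_of P lo \<inter> {lo..<b}) = p" "card (block_of P lo \<inter> {b..<hi}) = q"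
    "\<And>V. V \<in> P \<Longrightarrow> V \<noteq> block_of P lo \<Longrightarrow> V \<subseteq> {lo..<b} \<or> V \<subseteq> {b..<hi}"
proof -
  let ?B = "block_of P lo"
  have PF: "P \<in> ncp_first k lo hi (p + q)" and b: "b \<in> ?B" and pB: "card (?B \<inter> {..<b}) = p"
    using P unfolding ncp_first_split_def by auto
  note F = ncp_firstD[OF PF]
  have sub: "?B \<subseteq> {lo..<hi}" using is_partition_subset[OF F(1,3)] .
  then have "?B \<inter> {..<b} = ?B \<inter> {lo..<b}" by auto
  with pB show pS: "card (?B \<inter> {lo..<b}) = p" by simp
  show "b < hi" using sub b by auto
  show "lo < b"
  proof (rule ccontr)
    assume "\<not> lo < b"
    then have "?B \<inter> {lo..<b} = {}" by auto
    then show False using pS p by simp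
  qed
  have "?B = (?B \<inter> {lo..<b}) \<union> (?B \<inter> {b..<hi})" using sub by auto
  then have "card ?B = card (?B \<inter> {lo..<b}) + card (?B \<inter> {b..<hi})"
    using card_Un_disjoint[of "?B \<inter> {lo..<b}" "?B \<inter> {b..<hi}"] finite_subset[OF sub] by force
  then show "card (?B \<inter> {b..<hi}) = q" using pS F(5) by simp
  fix V assume "V \<in> P" "V \<noteq> ?B"
  then have "V \<subseteq> {..<b} \<or> V \<subseteq> {b<..}"
    using min_block_separates[OF F(1,2,3,4) _ b] by simp
  then show "V \<subseteq> {lo..<b} \<or> V \<subseteq> {b..<hi}"
    using is_partition_subset[OF F(1) \<open>V \<in> P\<close>] by (elim disjE) force+
qed

lemma restrict_ncp_first:
  assumes P: "P \<in> ncp_first k lo hi r" and A: "{l..<h} \<subseteq> {lo..<hi}"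
    and l: "l \<in> block_of P lo" "l < h"
    and sep: "\<And>V. V \<in> P \<Longrightarrow> V \<noteq> block_of P lo \<Longrightarrow> V \<subseteq> {l..<h} \<or> V \<inter> {l..<h} = {}"
  shows "restrict_partition P {l..<h} \<in> ncp_first k l h (card (block_of P lo \<inter> {l..<h}))"
    "block_of (restrict_partition P {l..<h}) l = block_of P lo \<inter> {l..<h}"
proof -
  let ?B = "block_of P lo" and ?R = "restrict_partition P {l..<h}"
  note F = ncp_firstD[OF P]
  have R: "?R = insert (?B \<inter> {l..<h}) {V \<in> P. V \<noteq> ?B \<and> V \<subseteq> {l..<h}}"
    by (rule restrict_partition_separated[OF F(1,3)]) (use l sep in auto)
  have part: "is_partition ?R {l..<h}"
    using is_partition_restrict[OF F(1), of "{l..<h}"] Int_absorb1[OF A] by simp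
  moreover have "?B \<inter> {l..<h} \<in> ?R" "l \<in> ?B \<inter> {l..<h}" using R l by auto
  moreover have "k dvd card C" if "C \<in> ?R" "C \<noteq> ?B \<inter> {l..<h}" for C
    using that F(6) unfolding R by auto
  ultimately show "?R \<in> ncp_first k l h (card (?B \<inter> {l..<h}))"
    using ncp_firstI[OF _ non_crossing_restrict[OF F(2)]] by blast
  show "block_of ?R l = ?B \<inter> {l..<h}"
    using block_of_eq[OF part] \<open>?B \<inter> {l..<h} \<in> ?R\<close> \<open>l \<in> ?B \<inter> {l..<h}\<close> by blast
qed

lemma restrict_ncp_first_split:
  assumes P: "P \<in> ncp_first_split k lo hi p q b" and p: "0 < p"
  shows "restrict_partition P {lo..<b} \<in> ncp_first k lo b p"
    "restrict_partition P {b..<hi} \<in> ncp_first k b hi q"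
    "glue_first (restrict_partition P {lo..<b}) lo (restrict_partition P {b..<hi}) b = P"
proof -
  let ?B = "block_of P lo"
  have PF: "P \<in> ncp_first k lo hi (p + q)" and b: "b \<in> ?B"
    using P unfolding ncp_first_split_def by auto
  note F = ncp_firstD[OF PF] and S = ncp_first_splitD[OF P p]
  have sepS: "V \<subseteq> {lo..<b} \<or> V \<inter> {lo..<b} = {}"
    and sepT: "V \<subseteq> {b..<hi} \<or> V \<inter> {b..<hi} = {}" if "V \<in> P" "V \<noteq> ?B" for V
    using S(5)[OF that] by auto
  note R1 = restrict_ncp_first[OF PF _ F(4) S(1) sepS] and R2 = restrict_ncp_first[OF PF _ b S(2) sepT]
  show "restrict_partition P {lo..<b} \<in> ncp_first k lo b p"
    using R1(1) S(2,3) by simp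
  show "restrict_partition P {b..<hi} \<in> ncp_first k b hi q"
    using R2(1) S(1,4) by simp
  have "join_blocks (restrict_partition P {lo..<b}) (?B \<inter> {lo..<b})
      (restrict_partition P {b..<hi}) (?B \<inter> {b..<hi}) = P"
  proof (rule join_blocks_restrict)
    show "is_partition P ({lo..<b} \<union> {b..<hi})" using F(1) S(1,2) ivl_disj_un_two(3)[of lo b hi] by simp
  qed (use F(3,4) b S in auto)
  then show "glue_first (restrict_partition P {lo..<b}) lo (restrict_partition P {b..<hi}) b = P"
    unfolding glue_first_def using R1(2) R2(2) S(1,2) by simp
qed

lemma bij_betw_glue_first:
  assumes "0 < p"
  shows "bij_betw (\<lambda>(P1, P2). glue_first P1 lo P2 b) (ncp_first k lo b p \<times> ncp_first k b hi q)
    (ncp_first_split k lo hi p q b)"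
  by (rule bij_betw_byWitness[where f' = "\<lambda>P. (restrict_partition P {lo..<b}, restrict_partition P {b..<hi})"])
    (use restrict_glue_first glue_first_mem_split restrict_ncp_first_split[OF _ assms] in auto)

lemma ncp_first_eq_UN_split:
  assumes "0 < q"
  shows "ncp_first k lo hi (p + q) = (\<Union>b\<in>{lo..<hi}. ncp_first_split k lo hi p q b)"
proof (intro set_eqI iffI)
  fix P assume P: "P \<in> ncp_first k lo hi (p + q)"
  let ?B = "block_of P lo"
  note F = ncp_firstD[OF P]
  have sub: "?B \<subseteq> {lo..<hi}" using is_partition_subset[OF F(1,3)] .
  have "p \<in> {..<card ?B}" using F(5) assms by simp
  then have "p \<in> (\<lambda>b. card (?B \<inter> {..<b})) ` ?B"
    using bij_betw_imp_surj_on[OF rank_bij_betw[OF finite_subset[OF sub finite_atLeastLessThan]]] by simp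
  then obtain b where b: "b \<in> ?B" "card (?B \<inter> {..<b}) = p" by (auto simp: image_iff)
  moreover have "P \<in> ncp_first_split k lo hi p q b" unfolding ncp_first_split_def using P b by simp
  ultimately show "P \<in> (\<Union>b\<in>{lo..<hi}. ncp_first_split k lo hi p q b)" using sub by blast
qed (auto simp: ncp_first_split_def)

lemma ncp_first_split_disjoint:
  assumes "b \<noteq> b'"
  shows "ncp_first_split k lo hi p q b \<inter> ncp_first_split k lo hi p q b' = {}"
proof (rule ccontr)
  assume "ncp_first_split k lo hi p q b \<inter> ncp_first_split k lo hi p q b' \<noteq> {}"
  then obtain P where P: "P \<in> ncp_first_split k lo hi p q b" "P \<in> ncp_first_split k lo hi p q b'"
    by blast
  then have F: "P \<in> ncp_first k lo hi (p + q)" unfolding ncp_first_split_def by simp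
  have "finite (block_of P lo)"
    using is_partition_subset[OF ncp_firstD(1,3)[OF F]] finite_subset by blast
  then show False
    using bij_betw_imp_inj_on[OF rank_bij_betw] P assms
    unfolding ncp_first_split_def inj_on_def by auto
qed

lemma sum_ncp_first_split:
  assumes "0 < p" "0 < q"
  shows "(\<Sum>P\<in>ncp_first k lo hi (p + q). f P) =
    (\<Sum>b\<in>{lo..<hi}. \<Sum>(P1, P2)\<in>ncp_first k lo b p \<times> ncp_first k b hi q. f (glue_first P1 lo P2 b))"
proof -
  have "finite (ncp_first_split k lo hi p q b)" for b
    by (rule finite_subset[OF _ finite_ncp_first[of k lo hi "p + q"]]) (auto simp: ncp_first_split_def)
  then have "(\<Sum>P\<in>ncp_first k lo hi (p + q). f P) = (\<Sum>b\<in>{lo..<hi}. \<Sum>P\<in>ncp_first_split k lo hi p q b. f P)"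
    unfolding ncp_first_eq_UN_split[OF assms(2)]
    by (intro sum.UNION_disjoint ballI impI ncp_first_split_disjoint) auto
  also have "\<dots> = (\<Sum>b\<in>{lo..<hi}. \<Sum>(P1, P2)\<in>ncp_first k lo b p \<times> ncp_first k b hi q. f (glue_first P1 lo P2 b))"
    by (intro sum.cong refl, subst sum.reindex_bij_betw[OF bij_betw_glue_first[OF assms(1)], symmetric])
      (simp add: split_def)
  finally show ?thesis .
qed

lemma bij_betw_insert_singleton:
  assumes "lo < hi"
  shows "bij_betw (insert {lo}) (ncp k {Suc lo..<hi}) (ncp_first k lo hi 1)"
proof (rule bij_betw_byWitness[where f' = "\<lambda>P. P - {{lo}}"])
  have lo: "insert lo {Suc lo..<hi} = {lo..<hi}" "{lo..<hi} - {lo} = {Suc lo..<hi}" using assms by auto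
  have notin: "{lo} \<notin> Q" if "Q \<in> ncp k {Suc lo..<hi}" for Q
    using that is_partition_subset unfolding ncp_def by fastforce
  have single: "block_of P lo = {lo}" if "P \<in> ncp_first k lo hi 1" for P
    using ncp_firstD(4,5)[OF that] by (metis card_1_singletonE singletonD)
  show "\<forall>Q\<in>ncp k {Suc lo..<hi}. insert {lo} Q - {{lo}} = Q" using notin by simp
  show "\<forall>P\<in>ncp_first k lo hi 1. insert {lo} (P - {{lo}}) = P"
    using single ncp_firstD(3) by (metis insert_Diff)
  show "insert {lo} ` ncp k {Suc lo..<hi} \<subseteq> ncp_first k lo hi 1"
  proof (rule image_subsetI)
    fix Q assume "Q \<in> ncp k {Suc lo..<hi}"
    then have Q: "is_partition Q {Suc lo..<hi}" "non_crossing Q" "\<forall>B\<in>Q. k dvd card B"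
      unfolding ncp_def by auto
    have "is_partition (insert {lo} Q) {lo..<hi}"
      using is_partition_insert_singleton[OF Q(1), of lo] lo(1) by simp
    then show "insert {lo} Q \<in> ncp_first k lo hi 1"
      using non_crossing_insert_singleton[OF Q(2)] Q(3) by (intro ncp_firstI[of _ lo hi "{lo}"]) auto
  qed
  show "(\<lambda>P. P - {{lo}}) ` ncp_first k lo hi 1 \<subseteq> ncp k {Suc lo..<hi}"
  proof (rule image_subsetI)
    fix P assume P: "P \<in> ncp_first k lo hi 1"
    note F = ncp_firstD[OF P]
    have "{lo} \<in> P" using F(3) single[OF P] by simp
    then have "is_partition (P - {{lo}}) {Suc lo..<hi}"
      using is_partition_remove_singleton[OF F(1)] lo(2) by metis
    then show "P - {{lo}} \<in> ncp k {Suc lo..<hi}"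
      unfolding ncp_def using F(6) single[OF P] non_crossing_subset[OF F(2)] by auto
  qed
qed

lemma ncp_eq_UN_ncp_first:
  assumes "0 < k" "lo < hi"
  shows "ncp k {lo..<hi} = (\<Union>j\<in>{1..hi - lo}. ncp_first k lo hi (j * k))"
proof (intro set_eqI iffI)
  fix P assume P: "P \<in> ncp k {lo..<hi}"
  then have F: "is_partition P {lo..<hi}" "non_crossing P" "\<forall>B\<in>P. k dvd card B"
    unfolding ncp_def by auto
  obtain B where B: "B \<in> P" "lo \<in> B" using is_partition_cover[OF F(1)] assms(2) by auto
  have sub: "B \<subseteq> {lo..<hi}" using is_partition_subset[OF F(1) B(1)] .
  obtain j where j: "card B = j * k" using F(3) B(1) by (metis dvd_def mult.commute)
  have "0 < card B" using B(2) sub finite_subset card_gt_0_iff by (metis empty_iff finite_atLeastLessThan)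
  then have "1 \<le> j" using j by (simp add: Suc_le_eq)
  moreover have "j \<le> hi - lo"
  proof -
    have "card B \<le> hi - lo" using card_mono[OF finite_atLeastLessThan sub] by simp
    moreover have "j \<le> j * k" using assms(1) by simp
    ultimately show ?thesis using j by linarith
  qed
  moreover have "P \<in> ncp_first k lo hi (j * k)"
    using ncp_firstI[OF F(1,2) B j] F(3) by blast
  ultimately show "P \<in> (\<Union>j\<in>{1..hi - lo}. ncp_first k lo hi (j * k))" by auto
next
  fix P assume "P \<in> (\<Union>j\<in>{1..hi - lo}. ncp_first k lo hi (j * k))"
  then obtain j where P: "P \<in> ncp_first k lo hi (j * k)" by blast
  have "k dvd card B" if "B \<in> P" for B
    using ncp_firstD(5,6)[OF P] that by (cases "B = block_of P lo") auto
  then show "P \<in> ncp k {lo..<hi}" using ncp_firstD(1,2)[OF P] unfolding ncp_def by simp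
qed

section \<open>Recurrences\<close>

lemma sum_cartesian_product_add:
  fixes f g :: "'a \<Rightarrow> nat"
  shows "(\<Sum>(x, y)\<in>A \<times> B. f x + g y) = (\<Sum>x\<in>A. f x) * card B + card A * (\<Sum>y\<in>B. g y)"
  by (simp add: sum.cartesian_product[symmetric] sum.distrib sum_distrib_left mult.commute)

lemma sum_mult_extend:
  fixes g :: "nat \<Rightarrow> nat"
  assumes "0 < k" "i \<le> N" "\<And>r. i < r \<Longrightarrow> g r = 0"
  shows "(\<Sum>j=1..i. g (j * k)) = (\<Sum>j=1..N. g (j * k))"
proof (rule sum.mono_neutral_left)
  show "\<forall>j\<in>{1..N} - {1..i}. g (j * k) = 0"
  proof
    fix j assume "j \<in> {1..N} - {1..i}"
    then have "i < j" by auto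
    also have "j \<le> j * k" using assms(1) by simp
    finally show "g (j * k) = 0" by (rule assms(3))
  qed
qed (use assms(2) in auto)

lemma sum_if_mult_eq:
  fixes k c N x :: nat
  assumes "0 < k" "k dvd c" "0 < c" "N * k < c \<Longrightarrow> x = 0"
  shows "(\<Sum>j=1..N. if j * k = c then x else 0) = x"
proof -
  obtain t where c: "c = t * k" using assms(2) by (metis dvd_def mult.commute)
  then have "j * k = c \<longleftrightarrow> j = t" for j using assms(1) by simp
  moreover have "1 \<le> t" using c assms(3) by (cases t) auto
  ultimately show ?thesis using assms(1,4) c by (simp add: sum.delta)
qed

definition ncp_first_card :: "nat \<Rightarrow> nat \<Rightarrow> nat \<Rightarrow> nat \<Rightarrow> nat" where
  "ncp_first_card k lo N r = card (ncp_first k lo (lo + N) r)"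

definition ncp_first_count :: "nat \<Rightarrow> nat \<Rightarrow> nat \<Rightarrow> nat \<Rightarrow> nat \<Rightarrow> nat" where
  "ncp_first_count k c lo N r = (\<Sum>P\<in>ncp_first k lo (lo + N) r. card {V \<in> P. lo \<notin> V \<and> card V = c})"

lemma ncp_first_empty:
  assumes "N < r"
  shows "ncp_first k lo (lo + N) r = {}"
proof (rule equals0I)
  fix P assume P: "P \<in> ncp_first k lo (lo + N) r"
  have "card (block_of P lo) \<le> N"
    using card_mono[OF finite_atLeastLessThan is_partition_subset[OF ncp_firstD(1,3)[OF P]]] by simp
  then show False using ncp_firstD(5)[OF P] assms by simp
qed

lemma ncp_first_card_eq_0: "N < r \<Longrightarrow> ncp_first_card k lo N r = 0"
  and ncp_first_count_eq_0: "N < r \<Longrightarrow> ncp_first_count k c lo N r = 0"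
  unfolding ncp_first_card_def ncp_first_count_def by (simp_all add: ncp_first_empty)

lemma ncp_first_card_add:
  assumes "0 < p" "0 < q"
  shows "ncp_first_card k lo N (p + q) =
    (\<Sum>i<N. ncp_first_card k lo i p * ncp_first_card k (lo + i) (N - i) q)"
  unfolding ncp_first_card_def
  using sum_ncp_first_split[OF assms, where k = k and lo = lo and hi = "lo + N" and f = "\<lambda>_. 1 :: nat"]
  by (simp add: sum.atLeastLessThan_shift_0[of _ lo] atLeast0LessThan card_cartesian_product)

lemma ncp_first_count_add:
  assumes "0 < p" "0 < q"
  shows "ncp_first_count k c lo N (p + q) =
    (\<Sum>i<N. ncp_first_count k c lo i p * ncp_first_card k (lo + i) (N - i) q
      + ncp_first_card k lo i p * ncp_first_count k c (lo + i) (N - i) q)"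
proof -
  let ?f = "\<lambda>x P. card {V \<in> P. x \<notin> V \<and> card V = c}"
  have "(\<Sum>(P1, P2)\<in>ncp_first k lo b p \<times> ncp_first k b hi q. ?f lo (glue_first P1 lo P2 b)) =
      (\<Sum>(P1, P2)\<in>ncp_first k lo b p \<times> ncp_first k b hi q. ?f lo P1 + ?f b P2)" for b hi
    by (rule sum.cong) (auto simp: glue_first_count)
  then show ?thesis
    unfolding ncp_first_count_def ncp_first_card_def sum_ncp_first_split[OF assms] sum_cartesian_product_add
    by (simp add: sum.atLeastLessThan_shift_0[of _ lo] atLeast0LessThan)
qed

lemma ncp_empty: "ncp k {} = {{}}"
  unfolding ncp_def is_partition_def non_crossing_def by auto

lemma sum_ncp_eq_sum_ncp_first:
  assumes "0 < k" "0 < N"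
  shows "(\<Sum>P\<in>ncp k {lo..<lo + N}. f P) = (\<Sum>j=1..N. \<Sum>P\<in>ncp_first k lo (lo + N) (j * k). f P)"
proof -
  have "ncp_first k lo (lo + N) (i * k) \<inter> ncp_first k lo (lo + N) (j * k) = {}" if "i \<noteq> j" for i j
  proof (rule equals0I)
    fix P assume "P \<in> ncp_first k lo (lo + N) (i * k) \<inter> ncp_first k lo (lo + N) (j * k)"
    then have "i * k = j * k" using ncp_firstD(5) by (metis IntD1 IntD2)
    then show False using that assms(1) by simp
  qed
  then show ?thesis
    using ncp_eq_UN_ncp_first[of k lo "lo + N"] assms
    by (simp add: sum.UNION_disjoint finite_ncp_first)
qed

lemma card_blocks_ncp_first:
  assumes P: "P \<in> ncp_first k lo hi r"
  shows "card {V \<in> P. card V = c} = card {V \<in> P. lo \<notin> V \<and> card V = c} + (if r = c then 1 else 0)"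
proof -
  note F = ncp_firstD[OF P]
  have "V = block_of P lo" if "V \<in> P" "lo \<in> V" for V using block_of_eq[OF F(1) that] by simp
  then have "{V \<in> P. card V = c} = {V \<in> P. lo \<notin> V \<and> card V = c} \<union> {V \<in> {block_of P lo}. card V = c}"
    using F(3) by blast
  also have "card \<dots> = card {V \<in> P. lo \<notin> V \<and> card V = c} + card {V \<in> {block_of P lo}. card V = c}"
    using is_partition_finite[OF F(1)] F(4) by (intro card_Un_disjoint) auto
  also have "{V \<in> {block_of P lo}. card V = c} = (if r = c then {block_of P lo} else {})"
    using F(5) by auto
  finally show ?thesis by simp
qed

lemma ncp_first_card_one:
  assumes "0 < k" "N \<le> M"
  shows "ncp_first_card k lo (Suc N) 1 =
    (if N = 0 then 1 else 0) + (\<Sum>j=1..M. ncp_first_card k (Suc lo) N (j * k))"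
proof -
  have "ncp_first_card k lo (Suc N) 1 = card (ncp k {Suc lo..<Suc lo + N})"
    unfolding ncp_first_card_def using bij_betw_same_card[OF bij_betw_insert_singleton[of lo "lo + Suc N" k]]
    by simp
  moreover have "(\<Sum>j=1..N. ncp_first_card k (Suc lo) N (j * k)) = (\<Sum>j=1..M. ncp_first_card k (Suc lo) N (j * k))"
    by (rule sum_mult_extend[OF assms]) (simp add: ncp_first_card_eq_0)
  ultimately show ?thesis
    using sum_ncp_eq_sum_ncp_first[OF assms(1), where N = N and lo = "Suc lo" and f = "\<lambda>_. 1 :: nat"]
    by (cases "N = 0") (simp_all add: ncp_empty ncp_first_card_def)
qed

lemma ncp_first_count_singleton:
  "(\<Sum>Q\<in>ncp k {Suc lo..<Suc lo + N}. card {V \<in> Q. card V = c}) = ncp_first_count k c lo (Suc N) 1"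
proof -
  have "card {V \<in> insert {lo} Q. lo \<notin> V \<and> card V = c} = card {V \<in> Q. card V = c}"
    if "Q \<in> ncp k {Suc lo..<Suc lo + N}" for Q
  proof -
    have "lo \<notin> V" if "V \<in> Q" for V
      using is_partition_subset[OF _ that] \<open>Q \<in> ncp k {Suc lo..<Suc lo + N}\<close>
      unfolding ncp_def by fastforce
    then have "{V \<in> insert {lo} Q. lo \<notin> V \<and> card V = c} = {V \<in> Q. card V = c}" by auto
    then show ?thesis by simp
  qed
  then show ?thesis
    unfolding ncp_first_count_def
    using sum.reindex_bij_betw[OF bij_betw_insert_singleton[of lo "lo + Suc N" k],
        of "\<lambda>P. card {V \<in> P. lo \<notin> V \<and> card V = c}"]
    by simp
qed

lemma ncp_first_count_one:
  assumes "0 < k" "k dvd c" "0 < c" "N \<le> M"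
  shows "ncp_first_count k c lo (Suc N) 1 =
    (\<Sum>j=1..M. ncp_first_count k c (Suc lo) N (j * k)) + ncp_first_card k (Suc lo) N c"
proof -
  have "ncp_first_count k c lo (Suc N) 1 =
    (\<Sum>j=1..N. ncp_first_count k c (Suc lo) N (j * k)) + ncp_first_card k (Suc lo) N c"
  proof (cases "N = 0")
    case True
    then show ?thesis
      using ncp_first_count_singleton[where k = k and lo = lo and N = 0 and c = c]
        ncp_first_card_eq_0[OF assms(3)] by (simp add: ncp_empty)
  next
    case False
    have "ncp_first_count k c lo (Suc N) 1 =
        (\<Sum>j=1..N. \<Sum>P\<in>ncp_first k (Suc lo) (Suc lo + N) (j * k). card {V \<in> P. card V = c})"
      using ncp_first_count_singleton[where k = k and lo = lo and N = N and c = c]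
        sum_ncp_eq_sum_ncp_first[OF assms(1), where N = N and lo = "Suc lo"
          and f = "\<lambda>P. card {V \<in> P. card V = c}"] False by simp
    also have "\<dots> = (\<Sum>j=1..N. ncp_first_count k c (Suc lo) N (j * k)
        + (if j * k = c then ncp_first_card k (Suc lo) N c else 0))"
      by (rule sum.cong[OF refl])
        (simp add: card_blocks_ncp_first sum.distrib ncp_first_count_def ncp_first_card_def)
    also have "\<dots> = (\<Sum>j=1..N. ncp_first_count k c (Suc lo) N (j * k)) + ncp_first_card k (Suc lo) N c"
    proof -
      have "N \<le> N * k" using assms(1) by simp
      then have "ncp_first_card k (Suc lo) N c = 0" if "N * k < c"
        using that by (intro ncp_first_card_eq_0) linarith
      then show ?thesis
        using sum_if_mult_eq[OF assms(1-3), of N "ncp_first_card k (Suc lo) N c"] by (simp add: sum.distrib)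
    qed
    finally show ?thesis .
  qed
  moreover have "(\<Sum>j=1..N. ncp_first_count k c (Suc lo) N (j * k)) =
      (\<Sum>j=1..M. ncp_first_count k c (Suc lo) N (j * k))"
    by (rule sum_mult_extend[OF assms(1,4)]) (simp add: ncp_first_count_eq_0)
  ultimately show ?thesis by simp
qed

lemma ncp_first_card_Suc:
  assumes "0 < k" "0 < r"
  shows "ncp_first_card k lo (Suc N) (Suc r) = (\<Sum>j\<le>N. ncp_first_card k (Suc lo) N (r + j * k))"
proof -
  let ?a = "\<lambda>i j. ncp_first_card k (Suc lo) i (j * k)" and ?b = "\<lambda>i. ncp_first_card k (Suc lo + i) (N - i) r"
  have one: "ncp_first_card k lo (Suc i) 1 = (if i = 0 then 1 else 0) + (\<Sum>j=1..N. ?a i j)" if "i < N" for i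
    using ncp_first_card_one[OF assms(1), of i N lo] that by simp
  have "ncp_first_card k lo (Suc N) (1 + r) = (\<Sum>i<N. ncp_first_card k lo (Suc i) 1 * ?b i)"
    using ncp_first_card_add[OF _ assms(2), of 1 k lo "Suc N"] ncp_first_card_eq_0[of 0 1]
    unfolding sum.lessThan_Suc_shift by simp
  also have "\<dots> = (\<Sum>i<N. ((if i = 0 then 1 else 0) + (\<Sum>j=1..N. ?a i j)) * ?b i)"
    by (rule sum.cong[OF refl]) (simp only: one lessThan_iff)
  also have "\<dots> = (\<Sum>i<N. (if i = 0 then 1 else 0) * ?b i) + (\<Sum>j=1..N. \<Sum>i<N. ?a i j * ?b i)"
    by (simp add: distrib_right sum.distrib sum_distrib_right) (rule sum.swap)
  also have "(\<Sum>i<N. (if i = 0 then 1 else 0) * ?b i) = ncp_first_card k (Suc lo) N r"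
  proof (cases N)
    case 0
    then show ?thesis using ncp_first_card_eq_0[OF assms(2), of k "Suc lo"] by simp
  next
    case (Suc n)
    then show ?thesis by (simp add: sum.lessThan_Suc_shift del: sum.lessThan_Suc)
  qed
  also have "(\<Sum>j=1..N. \<Sum>i<N. ?a i j * ?b i) = (\<Sum>j=1..N. ncp_first_card k (Suc lo) N (j * k + r))"
    using ncp_first_card_add[of "_ * k" r k "Suc lo" N] assms by simp
  finally show ?thesis by (simp add: atMost_atLeast0 sum.atLeast_Suc_atMost add.commute)
qed

lemma ncp_first_count_Suc:
  assumes "0 < k" "0 < r" "k dvd c" "0 < c"
  shows "ncp_first_count k c lo (Suc N) (Suc r) =
    (\<Sum>j\<le>N. ncp_first_count k c (Suc lo) N (r + j * k)) + ncp_first_card k (Suc lo) N (r + c)"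
proof -
  let ?a = "\<lambda>i j. ncp_first_card k (Suc lo) i (j * k)" and ?x = "\<lambda>i j. ncp_first_count k c (Suc lo) i (j * k)"
    and ?b = "\<lambda>i. ncp_first_card k (Suc lo + i) (N - i) r" and ?y = "\<lambda>i. ncp_first_count k c (Suc lo + i) (N - i) r"
    and ?e = "\<lambda>i. ncp_first_card k (Suc lo) i c"
  have card_one: "ncp_first_card k lo (Suc i) 1 = (if i = 0 then 1 else 0) + (\<Sum>j=1..N. ?a i j)"
    and count_one: "ncp_first_count k c lo (Suc i) 1 = (\<Sum>j=1..N. ?x i j) + ?e i" if "i < N" for i
    using ncp_first_card_one[OF assms(1), of i N lo] ncp_first_count_one[OF assms(1,3,4), of i N lo] that
    by simp_all
  have "ncp_first_count k c lo (Suc N) (1 + r) =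
      (\<Sum>i<N. ncp_first_count k c lo (Suc i) 1 * ?b i + ncp_first_card k lo (Suc i) 1 * ?y i)"
    using ncp_first_count_add[OF _ assms(2), of 1 k c lo "Suc N"] ncp_first_card_eq_0[of 0 1]
      ncp_first_count_eq_0[of 0 1] unfolding sum.lessThan_Suc_shift by simp
  also have "\<dots> = (\<Sum>i<N. ((\<Sum>j=1..N. ?x i j) + ?e i) * ?b i + ((if i = 0 then 1 else 0) + (\<Sum>j=1..N. ?a i j)) * ?y i)"
    by (rule sum.cong[OF refl])
      (simp only: card_one count_one lessThan_iff)
  also have "\<dots> = (\<Sum>j=1..N. \<Sum>i<N. ?x i j * ?b i + ?a i j * ?y i) + (\<Sum>i<N. ?e i * ?b i)
      + (\<Sum>i<N. (if i = 0 then 1 else 0) * ?y i)"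
    by (simp add: distrib_right sum.distrib sum_distrib_right) (intro arg_cong2[where f = "(+)"] sum.swap)
  also have "(\<Sum>j=1..N. \<Sum>i<N. ?x i j * ?b i + ?a i j * ?y i) = (\<Sum>j=1..N. ncp_first_count k c (Suc lo) N (j * k + r))"
    using ncp_first_count_add[of "_ * k" r k c "Suc lo" N] assms by simp
  also have "(\<Sum>i<N. ?e i * ?b i) = ncp_first_card k (Suc lo) N (c + r)"
    using ncp_first_card_add[OF assms(4,2), of k "Suc lo" N] by simp
  also have "(\<Sum>i<N. (if i = 0 then 1 else 0) * ?y i) = ncp_first_count k c (Suc lo) N r"
  proof (cases N)
    case 0
    then show ?thesis using ncp_first_count_eq_0[OF assms(2), of k c "Suc lo"] by simp
  next
    case (Suc n)
    then show ?thesis by (simp add: sum.lessThan_Suc_shift del: sum.lessThan_Suc)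
  qed
  finally show ?thesis by (simp add: atMost_atLeast0 sum.atLeast_Suc_atMost add.commute)
qed

section \<open>Closed forms\<close>

text \<open>For \<open>m > 0\<close>, \<open>card_formula k r m\<close> is \<open>r / m * ((m * (k + 1) + r - 1) choose (m - 1))\<close>,
  written without division.\<close>

fun card_formula :: "nat \<Rightarrow> nat \<Rightarrow> nat \<Rightarrow> int" where
  "card_formula k r 0 = 1"
| "card_formula k r (Suc m) =
     int ((m * (k + 1) + k + r) choose Suc m) - int k * int ((m * (k + 1) + k + r) choose m)"

definition count_formula :: "nat \<Rightarrow> nat \<Rightarrow> nat \<Rightarrow> nat \<Rightarrow> int" where
  "count_formula k e r m = int r * int ((m * (k + 1) + r + e - 1) choose m)"

lemma card_formula_Suc_Suc:
  "card_formula k (Suc r) (Suc m) = card_formula k r (Suc m) + card_formula k (Suc r + k) m"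
proof (cases m)
  case 0
  then show ?thesis by simp
next
  case (Suc m')
  define U where "U = m * (k + 1) + k + r"
  have "m' * (k + 1) + k + (Suc r + k) = U" "m * (k + 1) + k + Suc r = Suc U"
    using Suc by (simp_all add: U_def algebra_simps)
  moreover have "Suc U choose m = (U choose m') + (U choose m)" using Suc by simp
  ultimately show ?thesis using Suc by (simp add: U_def algebra_simps)
qed

lemma card_formula_0_Suc:
  assumes "0 < k"
  shows "card_formula k 0 (Suc m) = 0"
proof -
  obtain k' where k: "k = Suc k'" using assms by (cases k) auto
  define X where "X = Suc (m + (m * k + k'))"
  have "Suc m * (X choose Suc m) = Suc (m * k + k') * (X choose m)"
    unfolding X_def by (rule Suc_times_binomial_add)
  also have "Suc (m * k + k') = Suc m * k" using k by simp
  finally have "X choose Suc m = k * (X choose m)" by (simp only: mult.assoc mult_left_cancel)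
  moreover have "X = m * (k + 1) + k" using k by (simp add: X_def)
  ultimately show ?thesis by simp
qed

lemma count_formula_Suc_Suc:
  "count_formula k e (Suc r) (Suc m) + card_formula k (r + k + Suc e) m =
     count_formula k e r (Suc m) + count_formula k e (Suc r + k) m + card_formula k (r + Suc e) (Suc m)"
proof -
  define U where "U = m * (k + 1) + k + r + e"
  have "count_formula k e (Suc r) (Suc m) = int (Suc r) * (int (U choose m) + int (U choose Suc m))"
    "count_formula k e r (Suc m) = int r * int (U choose Suc m)"
    "count_formula k e (Suc r + k) m = int (Suc r + k) * int (U choose m)"
    unfolding count_formula_def U_def by (cases r; simp add: algebra_simps)+
  moreover have "card_formula k (r + Suc e) (Suc m) =
      int (U choose m) + int (U choose Suc m) - int k * int (Suc U choose m)"
    by (simp add: U_def algebra_simps)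
  moreover have "card_formula k (r + k + Suc e) m = int (U choose m) - int k * int (U choose m - 1)"
    if "m > 0"
    using that by (cases m) (simp_all add: U_def algebra_simps)
  moreover have "Suc U choose m = (U choose (m - 1)) + (U choose m)" if "m > 0"
    using that by (cases m) simp_all
  ultimately show ?thesis by (cases "m = 0") (simp_all add: algebra_simps)
qed

definition card_closed :: "nat \<Rightarrow> nat \<Rightarrow> nat \<Rightarrow> int" where
  "card_closed k N r = (if \<exists>m. N = r + m * k then card_formula k r ((N - r) div k) else 0)"

text \<open>The size of the counted blocks enters \<open>count_closed\<close> as \<open>Suc e\<close>.\<close>

definition count_closed :: "nat \<Rightarrow> nat \<Rightarrow> nat \<Rightarrow> nat \<Rightarrow> int" where
  "count_closed k e N r =
     (if \<exists>m. N = r + Suc e + m * k then count_formula k e r ((N - r - Suc e) div k) else 0)"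

lemma card_closed_eq: "0 < k \<Longrightarrow> card_closed k (r + m * k) r = card_formula k r m"
  unfolding card_closed_def by auto

lemma count_closed_eq: "0 < k \<Longrightarrow> count_closed k e (r + Suc e + m * k) r = count_formula k e r m"
  unfolding count_closed_def by auto

lemma card_closed_less: "N < r \<Longrightarrow> card_closed k N r = 0"
  unfolding card_closed_def by auto

lemma count_closed_less: "N < r + Suc e \<Longrightarrow> count_closed k e N r = 0"
  unfolding count_closed_def by auto

lemma card_closed_0:
  assumes "0 < k"
  shows "card_closed k N 0 = (if N = 0 then 1 else 0)"
proof (cases "\<exists>m. N = m * k")
  case True
  then obtain m where "N = m * k" by auto
  then show ?thesis
    using card_closed_eq[OF assms, of 0 m] card_formula_0_Suc[OF assms] assms by (cases m) simp_all
next
  case False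
  then have "N \<noteq> 0" by (metis mult_0)
  with False show ?thesis unfolding card_closed_def by simp
qed

lemma count_closed_0: "count_closed k e N 0 = 0"
  unfolding count_closed_def count_formula_def by simp

lemma not_ex_shift:
  fixes N a k :: nat
  assumes "\<not> (\<exists>m. N = a + m * k)"
  shows "\<not> (\<exists>m. N = a + k + m * k)"
proof
  assume "\<exists>m. N = a + k + m * k"
  then obtain m where "N = a + k + m * k" by blast
  then have "N = a + Suc m * k" by simp
  with assms show False by blast
qed

lemma card_closed_Suc_Suc:
  assumes "0 < k"
  shows "card_closed k (Suc N) (Suc r) = card_closed k N r + card_closed k (Suc N) (Suc r + k)"
proof (cases "\<exists>m. N = r + m * k")
  case True
  then obtain m where m: "N = r + m * k" by auto
  show ?thesis
  proof (cases m)
    case 0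
    then show ?thesis using m assms card_closed_eq[OF assms, of _ 0] card_closed_less by simp
  next
    case (Suc m')
    then have "Suc N = Suc r + m * k" "Suc N = (Suc r + k) + m' * k" using m by simp_all
    then show ?thesis using m Suc card_closed_eq[OF assms] card_formula_Suc_Suc by metis
  qed
next
  case False
  then have "\<not> (\<exists>m. Suc N = Suc r + m * k)" by simp
  with not_ex_shift[OF this] show ?thesis unfolding card_closed_def by simp
qed

lemma count_closed_Suc_Suc:
  assumes "0 < k"
  shows "count_closed k e (Suc N) (Suc r) + card_closed k N (r + k + Suc e) =
    count_closed k e N r + count_closed k e (Suc N) (Suc r + k) + card_closed k N (r + Suc e)"
proof (cases "\<exists>m. N = r + Suc e + m * k")
  case True
  then obtain m where m: "N = r + Suc e + m * k" by auto
  show ?thesis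
  proof (cases m)
    case 0
    then have "Suc N = Suc r + Suc e + 0 * k" "N = r + Suc e + 0 * k" "N = (r + Suc e) + 0 * k"
      using m by simp_all
    then show ?thesis
      using count_closed_eq[OF assms, of e "Suc r" 0] count_closed_eq[OF assms, of e r 0]
        card_closed_eq[OF assms, of "r + Suc e" 0] card_closed_less[of N "r + k + Suc e" k]
        count_closed_less[of "Suc N" "Suc r + k" e k] assms
      by (simp add: count_formula_def)
  next
    case (Suc m')
    then have "Suc N = Suc r + Suc e + m * k" "Suc N = (Suc r + k) + Suc e + m' * k"
      "N = (r + Suc e) + m * k" "N = (r + k + Suc e) + m' * k" using m by simp_all
    then show ?thesis
      using m Suc count_closed_eq[OF assms] card_closed_eq[OF assms] count_formula_Suc_Suc by metis
  qed
next
  case False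
  moreover have "\<not> (\<exists>m. N = r + Suc e + k + m * k)" using not_ex_shift[OF False] .
  ultimately show ?thesis unfolding card_closed_def count_closed_def by (simp add: ac_simps)
qed

lemma card_closed_Suc_eq_sum:
  assumes "0 < k"
  shows "card_closed k (Suc N) (Suc r) = (\<Sum>j\<le>N. card_closed k N (r + j * k))"
proof -
  let ?f = "\<lambda>j. card_closed k (Suc N) (Suc r + j * k)"
  have "card_closed k N (r + j * k) = ?f j - ?f (Suc j)" for j
    using card_closed_Suc_Suc[OF assms, of N "r + j * k"] by (simp add: algebra_simps)
  then have "(\<Sum>j\<le>N. card_closed k N (r + j * k)) = (\<Sum>j<Suc N. ?f j - ?f (Suc j))"
    unfolding lessThan_Suc_atMost by simp
  also have "\<dots> = ?f 0 - ?f (Suc N)" by (rule sum_lessThan_telescope')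
  moreover have "Suc N \<le> Suc N * k" using mult_le_mono2[of 1 k "Suc N"] assms by simp
  then have "?f (Suc N) = 0" by (intro card_closed_less) linarith
  ultimately show ?thesis by simp
qed

lemma count_closed_Suc_eq_sum:
  assumes "0 < k"
  shows "count_closed k e (Suc N) (Suc r) = (\<Sum>j\<le>N. count_closed k e N (r + j * k)) + card_closed k N (r + Suc e)"
proof -
  let ?f = "\<lambda>j. count_closed k e (Suc N) (Suc r + j * k) - card_closed k N (r + j * k + Suc e)"
  have "count_closed k e N (r + j * k) = ?f j - ?f (Suc j)" for j
    using count_closed_Suc_Suc[OF assms, of e N "r + j * k"] by (simp add: algebra_simps)
  then have "(\<Sum>j\<le>N. count_closed k e N (r + j * k)) = (\<Sum>j<Suc N. ?f j - ?f (Suc j))"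
    unfolding lessThan_Suc_atMost by simp
  also have "\<dots> = ?f 0 - ?f (Suc N)" by (rule sum_lessThan_telescope')
  moreover have "Suc N \<le> Suc N * k" using mult_le_mono2[of 1 k "Suc N"] assms by simp
  then have "?f (Suc N) = 0" by (simp add: count_closed_less card_closed_less)
  ultimately show ?thesis by simp
qed

lemma ncp_first_card_eq_card_closed:
  assumes "0 < k" "0 < r"
  shows "int (ncp_first_card k lo N r) = card_closed k N r"
  using assms(2)
proof (induction N arbitrary: lo r)
  case 0
  then show ?case by (simp add: ncp_first_card_eq_0 card_closed_less)
next
  case (Suc N)
  then obtain r' where r: "r = Suc r'" by (cases r) auto
  show ?case
  proof (cases "r' = 0")
    case True
    have "int (ncp_first_card k lo (Suc N) 1) = (if N = 0 then 1 else 0) + (\<Sum>j=1..N. card_closed k N (j * k))"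
      using ncp_first_card_one[OF assms(1) order_refl] Suc.IH assms(1) by simp
    then show ?thesis
      using card_closed_Suc_eq_sum[OF assms(1), of N 0] card_closed_0[OF assms(1)] r True
      by (simp add: atMost_atLeast0 sum.atLeast_Suc_atMost)
  next
    case False
    then show ?thesis
      using ncp_first_card_Suc[OF assms(1), of r' lo N] card_closed_Suc_eq_sum[OF assms(1), of N r'] Suc.IH r
      by simp
  qed
qed

lemma ncp_first_count_eq_count_closed:
  assumes "0 < k" "k dvd c" "0 < c" "0 < r"
  shows "int (ncp_first_count k c lo N r) = count_closed k (c - 1) N r"
  using assms(4)
proof (induction N arbitrary: lo r)
  case 0
  then show ?case by (simp add: ncp_first_count_eq_0 count_closed_less)
next
  case (Suc N)
  then obtain r' where r: "r = Suc r'" by (cases r) auto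
  have c: "Suc (c - 1) = c" using assms(3) by simp
  show ?case
  proof (cases "r' = 0")
    case True
    have "int (ncp_first_count k c lo (Suc N) 1) =
        (\<Sum>j=1..N. count_closed k (c - 1) N (j * k)) + card_closed k N c"
      using ncp_first_count_one[OF assms(1-3) order_refl] Suc.IH assms(1,3)
        ncp_first_card_eq_card_closed[OF assms(1,3)] by simp
    then show ?thesis
      using count_closed_Suc_eq_sum[OF assms(1), of "c - 1" N 0] count_closed_0 r True c
      by (simp add: atMost_atLeast0 sum.atLeast_Suc_atMost)
  next
    case False
    then show ?thesis
      using ncp_first_count_Suc[OF assms(1) _ assms(2,3), of r' lo N] count_closed_Suc_eq_sum[OF assms(1), of "c - 1" N r']
        Suc.IH ncp_first_card_eq_card_closed[OF assms(1)] r c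
      by (simp add: add.commute)
  qed
qed

lemma count_closed_binomial:
  assumes "0 < k" "0 < t"
  shows "count_closed k (t * k - 1) (Suc (k * n)) 1 =
    (if t + 1 \<le> n * (k + 1) then int ((n * (k + 1) - t - 1) choose (n * k - 1)) else 0)"
proof (cases "t \<le> n")
  case True
  then obtain d where d: "n = t + d" using le_Suc_ex by blast
  define e where "e = t * k - 1"
  have e: "Suc e = t * k" using assms unfolding e_def by simp
  have "Suc (k * n) = 1 + Suc e + d * k" using d e by (simp add: algebra_simps)
  have A: "d * (k + 1) + e = n * (k + 1) - t - 1" and B: "d * (k + 1) + e - d = n * k - 1"
    using d e by (simp_all add: algebra_simps)
  have "count_closed k e (Suc (k * n)) 1 = int ((d * (k + 1) + e) choose d)"
    using count_closed_eq[OF assms(1), of e 1 d] \<open>Suc (k * n) = 1 + Suc e + d * k\<close>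
    by (simp add: count_formula_def)
  also have "\<dots> = int ((d * (k + 1) + e) choose (d * (k + 1) + e - d))"
    by (subst binomial_symmetric) simp_all
  also have "\<dots> = int ((n * (k + 1) - t - 1) choose (n * k - 1))"
    by (subst B, subst A) (rule refl)
  finally have "count_closed k e (Suc (k * n)) 1 = int ((n * (k + 1) - t - 1) choose (n * k - 1))" .
  moreover have "t + 1 \<le> n * (k + 1)"
  proof -
    have "1 \<le> k * n" using True assms by simp
    moreover have "n * (k + 1) = k * n + n" by (simp add: algebra_simps)
    ultimately show ?thesis using True by linarith
  qed
  ultimately show ?thesis unfolding e_def by simp
next
  case False
  have "\<not> (\<exists>m. Suc (k * n) = 1 + Suc (t * k - 1) + m * k)"
  proof
    assume "\<exists>m. Suc (k * n) = 1 + Suc (t * k - 1) + m * k"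
    then obtain m where "k * n = t * k + m * k" using assms by auto
    moreover have "k * n < t * k" using False assms by simp
    ultimately show False by simp
  qed
  then have "count_closed k (t * k - 1) (Suc (k * n)) 1 = 0" unfolding count_closed_def by simp
  moreover have "n * (k + 1) - t - 1 < n * k - 1" if "t + 1 \<le> n * (k + 1)"
    using False that by (simp add: algebra_simps)
  ultimately show ?thesis by simp
qed

theorem theorem1:
  fixes k n t :: nat
  assumes "k > 0" and "n > 0" and "t > 0"
  shows "(\<Sum>P\<in>NCk k n. card {V\<in>P. card V = t * k})
           = (if t + 1 \<le> n * (k + 1) then (n * (k + 1) - t - 1) choose (n * k - 1) else 0)"
proof -
  have "NCk k n = ncp k {Suc 0..<Suc 0 + k * n}"
    unfolding NCk_def ncp_def by (simp add: atLeastLessThanSuc_atLeastAtMost mult.commute)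
  then have "(\<Sum>P\<in>NCk k n. card {V\<in>P. card V = t * k}) = ncp_first_count k (t * k) 0 (Suc (k * n)) 1"
    using ncp_first_count_singleton[where k = k and lo = 0 and N = "k * n" and c = "t * k"] by simp
  moreover have "int (ncp_first_count k (t * k) 0 (Suc (k * n)) 1) = count_closed k (t * k - 1) (Suc (k * n)) 1"
    using ncp_first_count_eq_count_closed[of k "t * k"] assms by simp
  ultimately show ?thesis
    using count_closed_binomial[OF assms(1,3), of n] by (simp split: if_splits)
qed

end
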